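(* Let $K$ be a knot and $N\ge1$. There exists a family of operators $d_{a|b}$ ($a,b\ge0$, $a+b=N$) on $\mathcal{H}(K)$ satisfying $$d_{N|0}=d_N,\quad [E,d_{a|b}]=b\cdot d_{a+1|b-1},\quad [F,d_{a|b}]=a\cdot d_{a-1|b+1},\quad [H,d_{a|b}]=(a-b)\cdot d_{a|b}.$$ The symmetry of $\mathcal{H}(K)$ exchanges $d_{a|b}$ with $d_{b|a}$.
   Context: $\mathcal{H}(K)$ is the reduced triply graded (HOMFLY-PT) Khovanov–Rozansky homology of the knot $K$ over $\mathbb{C}$, finite-dimensional and graded by $(q,a,t)$. By Gorsky–Hogancamp–Mellit, $\mathcal{H}(K)$ carries an action of $\mathfrak{sl}(2)$ by operators $E,F,H$ with $[E,F]=H$, $[H,E]=2E$, $[H,F]=-2F$, where $H=\tfrac12\deg_q$, $E$ raises $q$ by $4$ and $F$ lowers it by $4$; they preserve the $a$-grading and $\Delta=q+a+t$. As a consequence $\mathcal{H}(K)$ is symmetric: the $\mathfrak{sl}(2)$-module structure gives an identification exchanging tridegrees $(q,a,t)$ and $(-q,a,t+2q)$ (the symmetry). $d_N$ denotes the first differential of Rasmussen's spectral sequence from $\mathcal{H}(K)$ to reduced $\mathfrak{sl}(N)$ homology; it changes degrees by $(q,a,t)\mapsto(q+2N,a-2,t)$. The operator $E$ commutes with $d_N$. *)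

theory Defs
  imports "HOL-Analysis.Analysis"
begin

text \<open>Abstract model of the reduced triply graded homology H(K) of a knot K.  H(K) is C^n with a basis of homogeneous vectors indexed by the
  finite type 'n; basis vector i has tridegree (qd i, ad i, td i).\<close>

type_synonym 'n op = "complex ^ 'n ^ 'n"

definition smat :: "complex \<Rightarrow> 'n::finite op \<Rightarrow> 'n op" where
  "smat c M = (\<chi> i j. c * M $ i $ j)"

definition comm :: "'n::finite op \<Rightarrow> 'n op \<Rightarrow> 'n op" where
  "comm X Y = X ** Y - Y ** X"

primrec mpow :: "'n::finite op \<Rightarrow> nat \<Rightarrow> 'n op" where
  "mpow A 0 = mat 1"
| "mpow A (Suc k) = A ** mpow A k"

text \<open>Exponential of a nilpotent operator on an n-dimensional space
  (a finite sum, since A^n = 0).\<close>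
definition nexp :: "'n::finite op \<Rightarrow> 'n op" where
  "nexp A = (\<Sum>k\<le>CARD('n). smat (inverse (fact k)) (mpow A k))"

definition homog ::
  "('n::finite \<Rightarrow> int) \<Rightarrow> ('n \<Rightarrow> int) \<Rightarrow> ('n \<Rightarrow> int) \<Rightarrow> 'n op \<Rightarrow> int \<Rightarrow> int \<Rightarrow> int \<Rightarrow> bool" where
  "homog qd ad td M dq da dt \<longleftrightarrow>
     (\<forall>i j. M $ i $ j \<noteq> 0 \<longrightarrow>
        qd i = qd j + dq \<and> ad i = ad j + da \<and> td i = td j + dt)"

definition half_qdeg :: "('n::finite \<Rightarrow> int) \<Rightarrow> 'n op" where
  "half_qdeg qd = (\<chi> i j. if i = j then of_int (qd i) / 2 else 0)"

text \<open>The symmetry of H(K) given by the sl(2)-module structure: the Weyl group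
  element exp(E) exp(-F) exp(E), which maps tridegree (q,a,t) to (-q,a,t+2q).\<close>
definition sl2_sym :: "'n::finite op \<Rightarrow> 'n op \<Rightarrow> 'n op" where
  "sl2_sym E F = nexp E ** nexp (- F) ** nexp E"

end

theory Submission
  imports Defs
begin

text \<open>Put \<open>d_{a|b} = (a!/N!) ad_F^b d_N\<close>. Since \<open>[E, d_N] = 0\<close> and \<open>d_N\<close> has \<open>H\<close>-weight \<open>N\<close>,
  the operators \<open>ad_F^b d_N\<close> behave like the lowering chain of a highest weight vector for the
  adjoint \<open>sl(2)\<close>-action: \<open>ad_E ad_F^{k+1} d_N = (k+1)(N-k) ad_F^k d_N\<close>, which gives the
  commutation relations and \<open>ad_F^{N+1} d_N = 0\<close>.

  For the symmetry \<open>S = e^E e^{-F} e^E\<close>: \<open>E\<close> and \<open>F\<close> shift the q-degree by \<open>\<plusminus>4\<close>, so they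
  are nilpotent and their exponentials are invertible. Conjugation by \<open>e^X\<close> acts as \<open>e^{ad X}\<close>,
  so \<open>S\<close> preserves the span of the \<open>ad_F^b d_N\<close>, and \<open>S H S\<^sup>-\<^sup>1 = -H\<close>. Hence
  \<open>S d_{a|b} S\<^sup>-\<^sup>1\<close> lies in that span and has weight \<open>b - a\<close>, so it is a multiple of
  \<open>d_{b|a}\<close>; by symmetry in \<open>a\<close> and \<open>b\<close> the multiple can be taken nonzero.\<close>

lemma matrix_add_rdistrib: "((A::'a::semiring_1^'n^'m) + B) ** C = A ** C + B ** C"
  by (vector matrix_matrix_mult_def sum.distrib[symmetric] field_simps)

lemma matrix_diff_ldistrib: "(A::'a::ring_1^'n^'m) ** (B - C) = A ** B - A ** C"
  by (vector matrix_matrix_mult_def sum_subtractf[symmetric] field_simps)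

lemma matrix_diff_rdistrib: "((A::'a::ring_1^'n^'m) - B) ** C = A ** C - B ** C"
  by (vector matrix_matrix_mult_def sum_subtractf[symmetric] field_simps)

lemma matrix_minus_left: "(- (A::'a::ring_1^'n^'m)) ** B = - (A ** B)"
  by (vector matrix_matrix_mult_def sum_negf[symmetric])

lemma matrix_minus_right: "(A::'a::ring_1^'n^'m) ** (- B) = - (A ** B)"
  by (vector matrix_matrix_mult_def sum_negf[symmetric])

lemma matrix_sum_left: "(\<Sum>i\<in>I. f i) ** (B::'a::semiring_1^'p^'n) = (\<Sum>i\<in>I. f i ** B)"
  by (induction I rule: infinite_finite_induct) (simp_all add: matrix_add_rdistrib)

lemma matrix_sum_right: "(A::'a::semiring_1^'n^'m) ** (\<Sum>i\<in>I. f i) = (\<Sum>i\<in>I. A ** f i)"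
  by (induction I rule: infinite_finite_induct) (simp_all add: matrix_add_ldistrib)

lemmas matrix_mult_distribs = matrix_add_ldistrib matrix_add_rdistrib
  matrix_diff_ldistrib matrix_diff_rdistrib matrix_minus_left matrix_minus_right
  matrix_scalar_ac scalar_matrix_assoc[symmetric]

lemma matrix_mult_nonzero_entry:
  fixes A :: "'a::semiring_1^'n^'m"
  assumes "(A ** B) $ i $ j \<noteq> 0"
  obtains l where "A $ i $ l \<noteq> 0" "B $ l $ j \<noteq> 0"
proof -
  have "(\<Sum>l\<in>UNIV. A $ i $ l * B $ l $ j) \<noteq> 0"
    using assms by (simp add: matrix_matrix_mult_def)
  then obtain l where "A $ i $ l * B $ l $ j \<noteq> 0" by (meson sum.neutral)
  then show thesis using that by (metis mult_zero_left mult_zero_right)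
qed

lemma smat_of_real: "smat (of_real r) M = r *\<^sub>R M"
  by (simp add: smat_def vec_eq_iff) (simp add: scaleR_conv_of_real)

lemma smat_of_nat: "smat (of_nat k) M = real k *\<^sub>R M"
  and smat_of_int: "smat (of_int z) M = real_of_int z *\<^sub>R M"
  using smat_of_real[of "real k" M] smat_of_real[of "real_of_int z" M] by simp_all

lemma comm_add_left: "comm (A + B) X = comm A X + comm B X"
  and comm_add_right: "comm X (A + B) = comm X A + comm X B"
  and comm_diff_left: "comm (A - B) X = comm A X - comm B X"
  and comm_diff_right: "comm X (A - B) = comm X A - comm X B"
  and comm_minus_left: "comm (- A) X = - comm A X"
  and comm_minus_right: "comm X (- A) = - comm X A"
  and comm_scaleR_left: "comm (r *\<^sub>R A) X = r *\<^sub>R comm A X"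
  and comm_scaleR_right: "comm X (r *\<^sub>R A) = r *\<^sub>R comm X A"
  by (simp_all add: comm_def matrix_mult_distribs algebra_simps)

lemma comm_self [simp]: "comm X X = 0"
  and comm_zero_right [simp]: "comm X 0 = 0"
  by (simp_all add: comm_def)

lemma comm_swap: "comm X Y = - comm Y X"
  by (simp add: comm_def)

lemma comm_jacobi: "comm A (comm B C) = comm (comm A B) C + comm B (comm A C)"
  by (simp add: comm_def matrix_mult_distribs matrix_mul_assoc)

lemmas comm_linear_simps = comm_add_left comm_add_right comm_diff_left comm_diff_right
  comm_minus_left comm_minus_right comm_scaleR_left comm_scaleR_right

lemma linear_comm: "linear (comm X)"
  by (rule linearI) (simp_all add: comm_linear_simps)

lemma linear_comm_funpow: "linear (comm X ^^ j)"
  by (induction j)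
     (simp_all add: linear_compose[OF _ linear_comm, unfolded o_def] linear_id[unfolded id_def])

lemma comm_funpow_scaleR: "(comm X ^^ j) (r *\<^sub>R Y) = r *\<^sub>R (comm X ^^ j) Y"
  and comm_funpow_zero: "(comm X ^^ j) 0 = 0"
  using linear_comm_funpow[where X=X and j=j] by (simp_all add: linear_scale linear_0)

lemma comm_funpow_minus: "(comm (- X) ^^ j) Y = ((-1) ^ j) *\<^sub>R (comm X ^^ j) Y"
  by (induction j) (simp_all add: comm_minus_left comm_scaleR_right)

lemma comm_funpow_beyond:
  assumes "(comm X ^^ Suc J) Y = 0" "J < j"
  shows "(comm X ^^ j) Y = 0"
proof -
  have "j = (j - Suc J) + Suc J" using assms(2) by simp
  then show ?thesis by (metis assms(1) comm_funpow_zero comp_apply funpow_add)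
qed

definition qhomog :: "('n::finite \<Rightarrow> int) \<Rightarrow> 'n op \<Rightarrow> int \<Rightarrow> bool" where
  "qhomog om M e \<longleftrightarrow> (\<forall>i j. M $ i $ j \<noteq> 0 \<longrightarrow> om i = om j + e)"

lemma homog_imp_qhomog: "homog qd ad td M dq da dt \<Longrightarrow> qhomog qd M dq"
  by (simp add: homog_def qhomog_def)

lemma qhomog_mult:
  assumes "qhomog om A e" "qhomog om B f"
  shows "qhomog om (A ** B) (e + f)"
  unfolding qhomog_def
proof (intro allI impI)
  fix i j assume "(A ** B) $ i $ j \<noteq> 0"
  then obtain l where "A $ i $ l \<noteq> 0" "B $ l $ j \<noteq> 0" by (rule matrix_mult_nonzero_entry)
  with assms show "om i = om j + (e + f)" by (auto simp: qhomog_def)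
qed

lemma qhomog_diff: "qhomog om A e \<Longrightarrow> qhomog om B e \<Longrightarrow> qhomog om (A - B) e"
  unfolding qhomog_def by (metis diff_self diff_zero vector_minus_component)

lemma qhomog_uminus: "qhomog om (- A) e \<longleftrightarrow> qhomog om A e"
  by (simp add: qhomog_def)

lemma qhomog_comm: "qhomog om A e \<Longrightarrow> qhomog om B f \<Longrightarrow> qhomog om (comm A B) (e + f)"
  unfolding comm_def by (metis add.commute qhomog_diff qhomog_mult)

lemma qhomog_mpow:
  assumes "qhomog om X e"
  shows "qhomog om (mpow X k) (int k * e)"
proof (induction k)
  case 0 then show ?case by (simp add: qhomog_def mat_def)
next
  case (Suc k)
  have "qhomog om (X ** mpow X k) (e + int k * e)" by (rule qhomog_mult[OF assms Suc.IH])
  moreover have "e + int k * e = int (Suc k) * e" by (simp add: algebra_simps)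
  ultimately show ?case by simp
qed

lemma qhomog_reverse_grading: "qhomog (\<lambda>i. - om i) M (- e) \<longleftrightarrow> qhomog om M e"
proof -
  have "- om i = - om j + - e \<longleftrightarrow> om i = om j + e" for i j by linarith
  then show ?thesis by (simp add: qhomog_def)
qed

lemma qhomog_eq_0: "qhomog om M e \<Longrightarrow> (\<And>i j. om i \<noteq> om j + e) \<Longrightarrow> M = 0"
  by (auto simp: qhomog_def vec_eq_iff)

lemma comm_half_qdeg_entry:
  "comm (half_qdeg qd) M $ i $ j = (of_int (qd i) - of_int (qd j)) / 2 * M $ i $ j"
proof -
  have "(half_qdeg qd ** M) $ i $ j = of_int (qd i) / 2 * M $ i $ j"
    and "(M ** half_qdeg qd) $ i $ j = M $ i $ j * (of_int (qd j) / 2)"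
    unfolding half_qdeg_def matrix_matrix_mult_def
    by (simp_all add: if_distrib if_distribR sum.delta sum.delta' cong: if_cong)
  then show ?thesis by (simp add: comm_def field_simps)
qed

lemma comm_half_qdeg_eq_iff:
  "comm (half_qdeg qd) M = (of_int e / 2) *\<^sub>R M \<longleftrightarrow> qhomog qd M e"
proof -
  have "(of_int (qd i) - of_int (qd j)) / 2 * M $ i $ j = (of_int e / 2) *\<^sub>R M $ i $ j
        \<longleftrightarrow> (M $ i $ j \<noteq> 0 \<longrightarrow> qd i = qd j + e)" for i j
  proof -
    have "complex_of_real (of_int e / 2) = complex_of_int e / 2" by simp
    then have "(of_int (qd i) - of_int (qd j)) / 2 = complex_of_real (of_int e / 2)
          \<longleftrightarrow> complex_of_int (qd i) - complex_of_int (qd j) = complex_of_int e"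
      by (simp only: divide_cancel_right) simp
    also have "\<dots> \<longleftrightarrow> qd i = qd j + e" by (smt (verit) of_int_diff of_int_eq_iff)
    finally show ?thesis by (simp only: scaleR_conv_of_real mult_cancel_right) blast
  qed
  then show ?thesis by (simp add: vec_eq_iff comm_half_qdeg_entry qhomog_def)
qed

definition qpart :: "('n::finite \<Rightarrow> int) \<Rightarrow> int \<Rightarrow> 'n op \<Rightarrow> 'n op" where
  "qpart om e M = (\<chi> i j. if om i = om j + e then M $ i $ j else 0)"

lemma linear_qpart: "linear (qpart om e)"
  by (rule linearI) (simp_all add: qpart_def vec_eq_iff)

lemma qpart_qhomog: "qhomog om M f \<Longrightarrow> qpart om e M = (if f = e then M else 0)"
  by (force simp: qpart_def qhomog_def vec_eq_iff)

lemma mpow_nonzero_progression: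
  assumes "qhomog om X e" "mpow X k $ i $ j \<noteq> 0"
  shows "(\<lambda>m. om j + int m * e) ` {..k} \<subseteq> range om"
  using assms(2)
proof (induction k arbitrary: i)
  case 0 then show ?case by (simp add: mat_def split: if_splits)
next
  case (Suc k)
  then obtain l where l: "X $ i $ l \<noteq> 0" "mpow X k $ l $ j \<noteq> 0"
    by (auto elim: matrix_mult_nonzero_entry)
  have "om i = om l + e" using l(1) assms(1) by (simp add: qhomog_def)
  moreover have "om l = om j + int k * e" using l(2) qhomog_mpow[OF assms(1)] by (simp add: qhomog_def)
  ultimately have "om j + int (Suc k) * e = om i" by (simp add: algebra_simps)
  then have "om j + int (Suc k) * e \<in> range om" by (metis rangeI)
  then show ?case using Suc.IH[OF l(2)] by (auto simp: atMost_Suc)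
qed

text \<open>Pigeonhole: a nonzero entry of \<open>X^k\<close> witnesses \<open>k + 1\<close> distinct degrees.\<close>
lemma mpow_qhomog_nilpotent:
  assumes X: "qhomog om (X::'n::finite op) e" "e \<noteq> 0" and k: "CARD('n) \<le> k"
  shows "mpow X k = 0"
proof (rule ccontr)
  assume "mpow X k \<noteq> 0"
  then obtain i j where "mpow X k $ i $ j \<noteq> 0" by (auto simp: vec_eq_iff)
  then have "(\<lambda>m. om j + int m * e) ` {..k} \<subseteq> range om"
    by (rule mpow_nonzero_progression[OF X(1)])
  then have "card ((\<lambda>m. om j + int m * e) ` {..k}) \<le> card (range om)"
    by (simp add: card_mono)
  moreover have "inj_on (\<lambda>m. om j + int m * e) {..k}" using X(2) by (auto intro: inj_onI)
  moreover have "card (range om) \<le> CARD('n)" by (rule card_image_le) simp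
  ultimately show False using k by (simp add: card_image)
qed

lemma nexp_entry_not_raised:
  assumes X: "qhomog om X e" "0 < e" and ij: "om i \<le> om j"
  shows "nexp X $ i $ j = mat 1 $ i $ j"
proof -
  have "smat (inverse (fact k)) (mpow X k) $ i $ j = (if k = 0 then mat 1 $ i $ j else 0)" for k
  proof (cases "k = 0")
    case False
    then have "0 < int k * e" using X(2) by simp
    then have "om i \<noteq> om j + int k * e" using ij by linarith
    then have "mpow X k $ i $ j = 0" using qhomog_mpow[OF X(1), of k] by (auto simp: qhomog_def)
    then show ?thesis using False by (simp add: smat_def)
  qed (simp add: smat_def)
  then show ?thesis by (simp add: nexp_def sum_component)
qed

text \<open>Triangularity: a vector in the kernel has no component of minimal degree.\<close>
lemma invertible_nexp_raising:
  assumes X: "qhomog om X e" "0 < e"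
  shows "invertible (nexp X)"
proof -
  have "x = 0" if kernel: "nexp X *v x = 0" for x
  proof (rule ccontr)
    assume "x \<noteq> 0"
    define supp where "supp = {j. x $ j \<noteq> 0}"
    have "supp \<noteq> {}" using \<open>x \<noteq> 0\<close> by (auto simp: supp_def vec_eq_iff)
    then have "Min (om ` supp) \<in> om ` supp" by (intro Min_in) auto
    then obtain i where i: "i \<in> supp" "om i = Min (om ` supp)" by auto
    have "nexp X $ i $ j * x $ j = (if j = i then x $ i else 0)" for j
    proof (cases "j \<in> supp")
      case True
      then have "om i \<le> om j" using i(2) by simp
      then show ?thesis by (simp add: nexp_entry_not_raised[OF X] mat_def)
    qed (use i(1) in \<open>auto simp: supp_def\<close>)
    then have "(nexp X *v x) $ i = x $ i" by (simp add: matrix_vector_mult_def)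
    then show False using kernel i(1) by (simp add: supp_def)
  qed
  then show ?thesis by (simp add: invertible_left_inverse matrix_left_invertible_ker)
qed

lemma invertible_nexp:
  assumes "qhomog om X e" "e \<noteq> 0"
  shows "invertible (nexp X)"
proof (cases "0 < e")
  case False
  then have "qhomog (\<lambda>i. - om i) X (- e)" "0 < - e"
    using assms by (simp_all add: qhomog_reverse_grading)
  then show ?thesis by (rule invertible_nexp_raising)
qed (use assms invertible_nexp_raising in blast)

lemma pascal_sum:
  fixes g :: "nat \<Rightarrow> nat \<Rightarrow> 'a::real_vector"
  shows "(\<Sum>j\<le>Suc m. real (Suc m choose j) *\<^sub>R g j (Suc m - j)) =
         (\<Sum>j\<le>m. real (m choose j) *\<^sub>R g (Suc j) (m - j)) +
         (\<Sum>j\<le>m. real (m choose j) *\<^sub>R g j (Suc m - j))"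
proof -
  have shift: "(\<Sum>j\<le>Suc m. real (Suc m choose j) *\<^sub>R g j (Suc m - j)) =
      g 0 (Suc m) + (\<Sum>j\<le>m. real (Suc m choose Suc j) *\<^sub>R g (Suc j) (m - j))"
    by (subst sum.atMost_Suc_shift) simp
  have "(\<Sum>j\<le>m. real (m choose j) *\<^sub>R g j (Suc m - j)) =
        (\<Sum>j\<le>Suc m. real (m choose j) *\<^sub>R g j (Suc m - j))"
    by simp
  also have "\<dots> = g 0 (Suc m) + (\<Sum>j\<le>m. real (m choose Suc j) *\<^sub>R g (Suc j) (m - j))"
    by (subst sum.atMost_Suc_shift) simp
  finally show ?thesis
    unfolding shift by (simp add: scaleR_add_left sum.distrib algebra_simps)
qed

lemma mpow_mult_leibniz:
  "mpow X m ** Y = (\<Sum>j\<le>m. real (m choose j) *\<^sub>R ((comm X ^^ j) Y ** mpow X (m - j)))"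
proof (induction m)
  case 0 then show ?case by simp
next
  case (Suc m)
  let ?A = "\<lambda>j. (comm X ^^ j) Y"
  have shift: "X ** ?A j ** mpow X (m - j) = ?A (Suc j) ** mpow X (m - j) + ?A j ** mpow X (Suc m - j)"
    if "j \<le> m" for j
    using that by (simp add: comm_def matrix_diff_rdistrib Suc_diff_le matrix_mul_assoc)
  have "mpow X (Suc m) ** Y = X ** (mpow X m ** Y)" by (simp add: matrix_mul_assoc)
  also have "\<dots> = (\<Sum>j\<le>m. real (m choose j) *\<^sub>R (X ** ?A j ** mpow X (m - j)))"
    unfolding Suc by (simp add: matrix_sum_right matrix_mult_distribs matrix_mul_assoc)
  also have "\<dots> = (\<Sum>j\<le>m. real (m choose j) *\<^sub>R (?A (Suc j) ** mpow X (m - j)))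
                 + (\<Sum>j\<le>m. real (m choose j) *\<^sub>R (?A j ** mpow X (Suc m - j)))"
    by (simp add: shift scaleR_add_right sum.distrib)
  also have "\<dots> = (\<Sum>j\<le>Suc m. real (Suc m choose j) *\<^sub>R (?A j ** mpow X (Suc m - j)))"
    by (rule pascal_sum[symmetric])
  finally show ?case .
qed

lemma sum_antidiagonal_atMost:
  fixes h :: "nat \<Rightarrow> nat \<Rightarrow> 'a::comm_monoid_add"
  shows "(\<Sum>m\<le>M. \<Sum>j\<le>m. h j (m - j)) = (\<Sum>j\<le>M. \<Sum>l\<le>M - j. h j l)"
proof -
  have "Sigma {..M} (\<lambda>j. {..M - j}) = {(j, l). j + l \<le> M}" by auto
  then show ?thesis by (simp add: sum.Sigma sum.triangle_reindex_eq)
qed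

lemma nexp_eq_sum:
  assumes nil: "\<And>k. CARD('n) \<le> k \<Longrightarrow> mpow (X::'n::finite op) k = 0" and M: "CARD('n) \<le> M"
  shows "nexp X = (\<Sum>k\<le>M. inverse (fact k) *\<^sub>R mpow X k)"
proof -
  have "smat (inverse (fact k)) (mpow X k) = inverse (fact k) *\<^sub>R mpow X k" for k
    by (metis of_real_fact of_real_inverse smat_of_real)
  then have "nexp X = (\<Sum>k\<le>CARD('n). inverse (fact k) *\<^sub>R mpow X k)"
    by (simp only: nexp_def)
  also have "\<dots> = (\<Sum>k\<le>M. inverse (fact k) *\<^sub>R mpow X k)"
    by (rule sum.mono_neutral_left) (use M nil in auto)
  finally show ?thesis .
qed

text \<open>For nilpotent \<open>X\<close>, \<open>e^X Y e^{-X} = e^{ad X} Y\<close>: the Leibniz rule turns \<open>e^X Y\<close>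
  into a Cauchy product of \<open>e^{ad X} Y\<close> and \<open>e^X\<close>.\<close>
lemma nexp_mult_conj:
  assumes nil: "\<And>k. CARD('n) \<le> k \<Longrightarrow> mpow (X::'n::finite op) k = 0"
    and ad_nil: "(comm X ^^ Suc J) Y = 0"
  shows "nexp X ** Y = (\<Sum>j\<le>J. inverse (fact j) *\<^sub>R (comm X ^^ j) Y) ** nexp X"
proof -
  define M where "M = J + CARD('n)"
  define a where "a j = inverse (fact j) *\<^sub>R (comm X ^^ j) Y" for j
  define b where "b l = inverse (fact l) *\<^sub>R mpow X l" for l
  have b_sum: "(\<Sum>l\<le>M - j. b l) = nexp X" if "j \<le> J" for j
    unfolding b_def using that by (intro nexp_eq_sum[symmetric] nil) (simp_all add: M_def)
  have binomial: "inverse (fact m) *\<^sub>R (mpow X m ** Y) = (\<Sum>j\<le>m. a j ** b (m - j))" for m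
  proof -
    have "inverse (fact m) * real (m choose j) = inverse (fact j) * inverse (fact (m - j))"
      if "j \<le> m" for j
      using binomial_fact[OF that, where 'a=real] by (simp add: field_simps)
    then show ?thesis
      by (simp add: mpow_mult_leibniz scaleR_sum_right a_def b_def matrix_mult_distribs mult.commute)
  qed
  have "nexp X ** Y = (\<Sum>m\<le>M. inverse (fact m) *\<^sub>R (mpow X m ** Y))"
    by (simp add: nexp_eq_sum[OF nil, of M] M_def matrix_sum_left matrix_mult_distribs)
  also have "\<dots> = (\<Sum>m\<le>M. \<Sum>j\<le>m. a j ** b (m - j))"
    by (simp only: binomial)
  also have "\<dots> = (\<Sum>j\<le>M. \<Sum>l\<le>M - j. a j ** b l)"
    by (rule sum_antidiagonal_atMost)
  also have "\<dots> = (\<Sum>j\<le>M. a j ** (\<Sum>l\<le>M - j. b l))"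
    by (simp add: matrix_sum_right)
  also have "\<dots> = (\<Sum>j\<le>J. a j ** (\<Sum>l\<le>M - j. b l))"
    using comm_funpow_beyond[OF ad_nil] by (intro sum.mono_neutral_right) (auto simp: M_def a_def)
  also have "\<dots> = (\<Sum>j\<le>J. a j) ** nexp X"
    by (simp add: b_sum matrix_sum_left)
  finally show ?thesis by (simp add: a_def)
qed

lemma nexp_mult_conj_1:
  assumes nil: "\<And>k. CARD('n) \<le> k \<Longrightarrow> mpow (X::'n::finite op) k = 0"
    and "comm X (comm X Y) = 0"
  shows "nexp X ** Y = (Y + comm X Y) ** nexp X"
  using nexp_mult_conj[OF nil, of 1 Y] assms(2) by (simp add: numeral_2_eq_2)

lemma linear_image_span_subset:
  assumes "linear f" "f ` B \<subseteq> span B" "y \<in> span B"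
  shows "f y \<in> span B"
proof -
  have "f ` span B = span (f ` B)" by (simp add: span_linear_image[OF assms(1)])
  also have "\<dots> \<subseteq> span B" by (rule span_minimal[OF assms(2) subspace_span])
  finally show ?thesis using assms(3) by blast
qed

locale graded_sl2 =
  fixes qd :: "'n::finite \<Rightarrow> int" and E F H :: "'n op"
  assumes H_def: "H = half_qdeg qd"
    and comm_E_F: "comm E F = H"
    and E_qhomog: "qhomog qd E 4"
    and F_qhomog: "qhomog qd F (-4)"
begin

abbreviation S :: "'n op" where "S \<equiv> sl2_sym E F"

lemma comm_H_eq_iff: "comm H M = (of_int e / 2) *\<^sub>R M \<longleftrightarrow> qhomog qd M e"
  unfolding H_def by (rule comm_half_qdeg_eq_iff)

lemma comm_E_H: "comm E H = - (2 *\<^sub>R E)"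
  using comm_H_eq_iff[of E 4] E_qhomog comm_swap[of E H] by simp

lemma comm_F_H: "comm F H = 2 *\<^sub>R F"
  using comm_H_eq_iff[of F "-4"] F_qhomog comm_swap[of F H] by simp

lemma comm_F_E: "comm F E = - H"
  using comm_E_F comm_swap[of F E] by simp

lemma neg_F_qhomog: "qhomog qd (- F) (-4)"
  using F_qhomog by (simp add: qhomog_uminus)

lemma mpow_E_nilpotent: "CARD('n) \<le> k \<Longrightarrow> mpow E k = 0"
  using mpow_qhomog_nilpotent[OF E_qhomog] by simp

lemma mpow_neg_F_nilpotent: "CARD('n) \<le> k \<Longrightarrow> mpow (- F) k = 0"
  using mpow_qhomog_nilpotent[OF neg_F_qhomog] by simp

lemma invertible_sl2_sym: "invertible S"
  unfolding sl2_sym_def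
  using invertible_nexp[OF E_qhomog] invertible_nexp[OF neg_F_qhomog] by (simp add: invertible_mult)

lemma nexp_E_mult_H: "nexp E ** H = (H - 2 *\<^sub>R E) ** nexp E"
  using nexp_mult_conj_1[OF mpow_E_nilpotent, of H] by (simp add: comm_E_H comm_linear_simps)

lemma nexp_neg_F_mult_H_minus_2E: "nexp (- F) ** (H - 2 *\<^sub>R E) = (- H - 2 *\<^sub>R E) ** nexp (- F)"
proof -
  let ?Y = "H - 2 *\<^sub>R E"
  have ad1: "comm (- F) ?Y = - (2 *\<^sub>R F) - 2 *\<^sub>R H"
    by (simp add: comm_linear_simps comm_F_H comm_F_E)
  have ad2: "comm (- F) (- (2 *\<^sub>R F) - 2 *\<^sub>R H) = 4 *\<^sub>R F"
    by (simp add: comm_linear_simps comm_F_H)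
  have ad3: "comm (- F) (4 *\<^sub>R F) = 0"
    by (simp add: comm_linear_simps)
  have "(comm (- F) ^^ Suc 2) ?Y = 0"
    by (simp add: numeral_2_eq_2 ad1 ad2 ad3)
  from nexp_mult_conj[OF mpow_neg_F_nilpotent this]
  have "nexp (- F) ** ?Y = (?Y + (- (2 *\<^sub>R F) - 2 *\<^sub>R H) + inverse 2 *\<^sub>R (4 *\<^sub>R F)) ** nexp (- F)"
    by (simp add: numeral_2_eq_2 ad1 ad2)
  also have "?Y + (- (2 *\<^sub>R F) - 2 *\<^sub>R H) + inverse 2 *\<^sub>R (4 *\<^sub>R F) = - H - 2 *\<^sub>R E"
    by (simp add: algebra_simps scaleR_2)
  finally show ?thesis .
qed

lemma nexp_E_mult_neg_H_minus_2E: "nexp E ** (- H - 2 *\<^sub>R E) = (- H) ** nexp E"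
  using nexp_mult_conj_1[OF mpow_E_nilpotent, of "- H - 2 *\<^sub>R E"]
  by (simp add: comm_E_H comm_linear_simps)

lemma sl2_sym_mult_H: "S ** H = - (H ** S)"
proof -
  have "S ** H = nexp E ** nexp (- F) ** (nexp E ** H)"
    by (simp add: sl2_sym_def matrix_mul_assoc)
  also have "\<dots> = nexp E ** (nexp (- F) ** (H - 2 *\<^sub>R E)) ** nexp E"
    by (simp add: nexp_E_mult_H matrix_mul_assoc)
  also have "\<dots> = nexp E ** ((- H - 2 *\<^sub>R E) ** nexp (- F)) ** nexp E"
    by (simp only: nexp_neg_F_mult_H_minus_2E)
  also have "\<dots> = (nexp E ** (- H - 2 *\<^sub>R E)) ** (nexp (- F) ** nexp E)"
    by (simp add: matrix_mul_assoc)
  also have "\<dots> = - (H ** S)"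
    by (simp add: sl2_sym_def nexp_E_mult_neg_H_minus_2E matrix_minus_left matrix_mul_assoc)
  finally show ?thesis .
qed

lemma sl2_sym_conj_weight:
  assumes conj: "S ** Y = Y' ** S" and weight: "comm H Y = c *\<^sub>R Y"
  shows "comm H Y' = (- c) *\<^sub>R Y'"
proof -
  obtain S' where S': "S ** S' = mat 1" using invertible_sl2_sym by (auto simp: invertible_def)
  have "comm H Y' ** S = - (S ** comm H Y)"
    by (simp add: comm_def matrix_mult_distribs matrix_mul_assoc sl2_sym_mult_H flip: conj)
       (simp add: conj matrix_mul_assoc[symmetric] sl2_sym_mult_H matrix_minus_right)
  also have "\<dots> = (- c) *\<^sub>R (Y' ** S)"
    by (simp add: weight conj matrix_mult_distribs)
  finally have "comm H Y' ** S ** S' = (- c) *\<^sub>R (Y' ** S ** S')"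
    by (simp add: matrix_mult_distribs)
  then show ?thesis by (simp add: S' flip: matrix_mul_assoc)
qed

end

locale sl2_highest_weight = graded_sl2 qd E F H for qd :: "'n::finite \<Rightarrow> int" and E F H +
  fixes dN :: "'n op" and N :: nat
  assumes dN_qhomog: "qhomog qd dN (2 * int N)"
    and comm_E_dN: "comm E dN = 0"
begin

definition lowered :: "nat \<Rightarrow> 'n op" where
  "lowered k = (comm F ^^ k) dN"

lemma lowered_0 [simp]: "lowered 0 = dN"
  and lowered_Suc: "lowered (Suc k) = comm F (lowered k)"
  by (simp_all add: lowered_def)

lemma comm_F_funpow_lowered: "(comm F ^^ j) (lowered k) = lowered (j + k)"
  by (induction j) (simp_all add: lowered_Suc)

lemma lowered_qhomog: "qhomog qd (lowered k) (2 * int N - 4 * int k)"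
proof (induction k)
  case 0 then show ?case using dN_qhomog by simp
next
  case (Suc k)
  then show ?case using qhomog_comm[OF F_qhomog Suc] by (simp add: lowered_Suc algebra_simps)
qed

lemma comm_H_lowered: "comm H (lowered k) = (real N - 2 * real k) *\<^sub>R lowered k"
  using comm_H_eq_iff[THEN iffD2, OF lowered_qhomog[of k]] by simp

lemma comm_E_lowered_Suc:
  "comm E (lowered (Suc k)) = (real (Suc k) * (real N - real k)) *\<^sub>R lowered k"
proof (induction k)
  case 0
  then show ?case
    using comm_jacobi[of E F dN] comm_H_lowered[of 0] by (simp add: comm_E_F comm_E_dN lowered_Suc)
next
  case (Suc k)
  have "comm E (lowered (Suc (Suc k))) = comm H (lowered (Suc k)) + comm F (comm E (lowered (Suc k)))"
    using comm_jacobi[of E F "lowered (Suc k)"] by (simp add: comm_E_F lowered_Suc)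
  also have "\<dots> = (real N - 2 * real (Suc k) + real (Suc k) * (real N - real k)) *\<^sub>R lowered (Suc k)"
    by (simp add: comm_H_lowered Suc comm_scaleR_right scaleR_add_left flip: lowered_Suc)
  finally show ?case by (simp add: algebra_simps)
qed

lemma lowered_eventually_0: "\<exists>K. \<forall>k\<ge>K. lowered k = 0"
proof -
  obtain B where B: "\<And>i. \<bar>qd i\<bar> \<le> B"
    using finite_imageI[OF finite[of UNIV], of "\<lambda>i. \<bar>qd i\<bar>"] by (metis Max_ge rangeI)
  have "lowered k = 0" if "N + nat B + 1 \<le> k" for k
  proof (rule qhomog_eq_0[OF lowered_qhomog])
    fix i j
    have "\<bar>qd i\<bar> \<le> B" "\<bar>qd j\<bar> \<le> B" "int N + B + 1 \<le> int k" using B that by auto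
    then show "qd i \<noteq> qd j + (2 * int N - 4 * int k)" by linarith
  qed
  then show ?thesis by blast
qed

lemma lowered_eq_0:
  assumes "N < k"
  shows "lowered k = 0"
proof -
  obtain K where K: "\<And>k. K \<le> k \<Longrightarrow> lowered k = 0" using lowered_eventually_0 by blast
  have "k \<le> max K k" by simp
  then show ?thesis using assms
  proof (induction rule: inc_induct)
    case base then show ?case by (simp add: K)
  next
    case (step n)
    have "(real (Suc n) * (real N - real n)) *\<^sub>R lowered n = 0"
      using comm_E_lowered_Suc[of n] step by simp
    then show ?case using step.prems by simp
  qed
qed

definition lowering_span :: "'n op set" where
  "lowering_span = span (lowered ` {..N})"

lemma lowered_in_lowering_span: "lowered k \<in> lowering_span"
  by (cases "k \<le> N") (simp_all add: lowering_span_def lowered_eq_0 span_base span_zero)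

lemma comm_F_lowering_span: "Y \<in> lowering_span \<Longrightarrow> comm F Y \<in> lowering_span"
  unfolding lowering_span_def
  by (rule linear_image_span_subset[OF linear_comm])
     (auto simp: lowered_Suc[symmetric] lowered_in_lowering_span[unfolded lowering_span_def])

lemma comm_E_lowering_span: "Y \<in> lowering_span \<Longrightarrow> comm E Y \<in> lowering_span"
  unfolding lowering_span_def
proof (rule linear_image_span_subset[OF linear_comm], safe)
  fix k
  show "comm E (lowered k) \<in> span (lowered ` {..N})"
    using lowered_in_lowering_span[unfolded lowering_span_def]
    by (cases k) (simp_all add: comm_E_dN comm_E_lowered_Suc span_zero span_scale)
qed

lemma comm_E_funpow_lowered: "k < j \<Longrightarrow> (comm E ^^ j) (lowered k) = 0"
proof (induction k arbitrary: j)
  case 0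
  then obtain j' where j: "j = Suc j'" by (cases j) auto
  show ?case unfolding j funpow_Suc_right o_def by (simp add: comm_E_dN comm_funpow_zero)
next
  case (Suc k)
  then obtain j' where j: "j = Suc j'" "k < j'" by (cases j) auto
  show ?case
    unfolding j(1) funpow_Suc_right o_def
    by (simp add: comm_E_lowered_Suc comm_funpow_scaleR Suc.IH[OF j(2)])
qed

lemma comm_E_funpow_nilpotent: "Y \<in> lowering_span \<Longrightarrow> (comm E ^^ Suc N) Y = 0"
  unfolding lowering_span_def
proof (rule linear_eq_0_on_span[OF linear_comm_funpow])
  fix Z assume "Z \<in> lowered ` {..N}"
  then obtain k where "k \<le> N" "Z = lowered k" by auto
  then show "(comm E ^^ Suc N) Z = 0" using comm_E_funpow_lowered[of k "Suc N"] by simp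
qed

lemma comm_F_funpow_nilpotent: "Y \<in> lowering_span \<Longrightarrow> (comm F ^^ Suc N) Y = 0"
  unfolding lowering_span_def
proof (rule linear_eq_0_on_span[OF linear_comm_funpow])
  fix Z assume "Z \<in> lowered ` {..N}"
  then obtain k where "Z = lowered k" by auto
  then show "(comm F ^^ Suc N) Z = 0" by (simp only: comm_F_funpow_lowered lowered_eq_0)
qed

lemma nexp_conj_lowering_span:
  assumes nil: "\<And>k. CARD('n) \<le> k \<Longrightarrow> mpow X k = 0"
    and closed: "\<And>Y. Y \<in> lowering_span \<Longrightarrow> comm X Y \<in> lowering_span"
    and ad_nil: "\<And>Y. Y \<in> lowering_span \<Longrightarrow> (comm X ^^ Suc N) Y = 0"
    and Y: "Y \<in> lowering_span"
  obtains Y' where "Y' \<in> lowering_span" "nexp X ** Y = Y' ** nexp X"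
proof
  have "(comm X ^^ j) Y \<in> lowering_span" for j
    by (induction j) (simp_all add: Y closed)
  then show "(\<Sum>j\<le>N. inverse (fact j) *\<^sub>R (comm X ^^ j) Y) \<in> lowering_span"
    unfolding lowering_span_def by (intro span_sum span_scale) (simp add: lowering_span_def)
  show "nexp X ** Y = (\<Sum>j\<le>N. inverse (fact j) *\<^sub>R (comm X ^^ j) Y) ** nexp X"
    by (rule nexp_mult_conj[OF nil ad_nil[OF Y]])
qed

lemma nexp_E_conj_lowering_span:
  assumes "Y \<in> lowering_span"
  obtains Y' where "Y' \<in> lowering_span" "nexp E ** Y = Y' ** nexp E"
  using nexp_conj_lowering_span[of E Y] mpow_E_nilpotent comm_E_lowering_span
    comm_E_funpow_nilpotent assms by blast

lemma nexp_neg_F_conj_lowering_span: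
  assumes "Y \<in> lowering_span"
  obtains Y' where "Y' \<in> lowering_span" "nexp (- F) ** Y = Y' ** nexp (- F)"
proof -
  have closed: "comm (- F) Z \<in> lowering_span" if "Z \<in> lowering_span" for Z
    using comm_F_lowering_span[OF that] unfolding lowering_span_def
    by (simp add: comm_minus_left span_neg)
  have nil: "(comm (- F) ^^ Suc N) Z = 0" if "Z \<in> lowering_span" for Z
    using that by (simp only: comm_funpow_minus comm_F_funpow_nilpotent scaleR_zero_right)
  show ?thesis
    using nexp_conj_lowering_span[of "- F" Y] mpow_neg_F_nilpotent closed nil assms that by blast
qed

lemma sl2_sym_conj_lowering_span:
  assumes Y: "Y \<in> lowering_span"
  obtains Y' where "Y' \<in> lowering_span" "S ** Y = Y' ** S"
proof -
  obtain Y1 where Y1: "Y1 \<in> lowering_span" "nexp E ** Y = Y1 ** nexp E"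
    by (rule nexp_E_conj_lowering_span[OF Y])
  obtain Y2 where Y2: "Y2 \<in> lowering_span" "nexp (- F) ** Y1 = Y2 ** nexp (- F)"
    by (rule nexp_neg_F_conj_lowering_span[OF Y1(1)])
  obtain Y3 where Y3: "Y3 \<in> lowering_span" "nexp E ** Y2 = Y3 ** nexp E"
    by (rule nexp_E_conj_lowering_span[OF Y2(1)])
  have "S ** Y = nexp E ** (nexp (- F) ** Y1) ** nexp E"
    by (simp add: sl2_sym_def Y1(2) flip: matrix_mul_assoc)
  also have "\<dots> = Y3 ** S"
    by (simp add: sl2_sym_def Y2(2) matrix_mul_assoc Y3(2))
  finally show ?thesis using Y3(1) that by blast
qed

lemma lowering_span_qhomog:
  assumes "Y \<in> lowering_span" "qhomog qd Y (2 * int N - 4 * int k)"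
  shows "Y \<in> span {lowered k}"
proof -
  let ?P = "qpart qd (2 * int N - 4 * int k)"
  have "?P (lowered m) \<in> span {lowered k}" for m
    using qpart_qhomog[OF lowered_qhomog[of m]] by (simp add: span_base span_zero)
  then have "?P ` lowering_span \<subseteq> span {lowered k}"
    unfolding lowering_span_def span_linear_image[OF linear_qpart, symmetric]
    by (intro span_minimal subspace_span) auto
  moreover have "Y = ?P Y" using qpart_qhomog[OF assms(2)] by simp
  ultimately show ?thesis using assms(1) by blast
qed

lemma sl2_sym_mult_lowered:
  assumes "b \<le> N"
  obtains \<gamma> where "S ** lowered b = \<gamma> *\<^sub>R (lowered (N - b) ** S)"
proof -
  obtain Y where Y: "Y \<in> lowering_span" "S ** lowered b = Y ** S"
    using sl2_sym_conj_lowering_span[OF lowered_in_lowering_span] by blast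
  have "comm H Y = (- (real N - 2 * real b)) *\<^sub>R Y"
    by (rule sl2_sym_conj_weight[OF Y(2) comm_H_lowered])
  also have "- (real N - 2 * real b) = of_int (2 * int N - 4 * int (N - b)) / 2"
    using assms by (simp add: of_nat_diff)
  finally have "qhomog qd Y (2 * int N - 4 * int (N - b))"
    by (simp only: comm_H_eq_iff)
  then have "Y \<in> span {lowered (N - b)}" by (rule lowering_span_qhomog[OF Y(1)])
  then obtain \<gamma> where "Y = \<gamma> *\<^sub>R lowered (N - b)" by (auto simp: span_singleton)
  then show ?thesis using Y(2) by (intro that[of \<gamma>]) (simp add: matrix_mult_distribs)
qed

definition differential :: "nat \<Rightarrow> nat \<Rightarrow> 'n op" where
  "differential a b = (fact a / fact N) *\<^sub>R lowered b"

lemma differential_N_0: "differential N 0 = dN"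
  by (simp add: differential_def)

lemma comm_E_differential:
  assumes "a + b = N"
  shows "comm E (differential a b) = smat (of_nat b) (differential (a + 1) (b - 1))"
proof (cases b)
  case 0
  then show ?thesis by (simp add: differential_def comm_scaleR_right comm_E_dN smat_def vec_eq_iff)
next
  case (Suc b')
  have "real N - real b' = real a + 1" using assms Suc by simp
  then have coeff: "fact a / fact N * (real (Suc b') * (real N - real b')) =
                    real b * (fact (a + 1) / fact N)"
    using Suc by (simp add: field_simps)
  have "comm E (differential a b) =
        (fact a / fact N * (real (Suc b') * (real N - real b'))) *\<^sub>R lowered b'"
    by (simp add: differential_def comm_scaleR_right Suc comm_E_lowered_Suc)
  also have "\<dots> = real b *\<^sub>R differential (a + 1) (b - 1)"
    unfolding coeff by (simp add: differential_def Suc)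
  finally show ?thesis by (simp only: smat_of_nat)
qed

lemma comm_F_differential:
  assumes "a + b = N"
  shows "comm F (differential a b) = smat (of_nat a) (differential (a - 1) (b + 1))"
proof (cases a)
  case 0
  then have "lowered (Suc b) = 0" using assms by (simp add: lowered_eq_0)
  then show ?thesis
    using 0 by (simp add: differential_def comm_scaleR_right smat_def vec_eq_iff flip: lowered_Suc)
next
  case (Suc a')
  have "comm F (differential a b) = (fact a / fact N) *\<^sub>R lowered (Suc b)"
    by (simp add: differential_def comm_scaleR_right lowered_Suc)
  also have "\<dots> = real a *\<^sub>R differential (a - 1) (b + 1)"
    using Suc by (simp add: differential_def)
  finally show ?thesis by (simp only: smat_of_nat)
qed

lemma comm_H_differential:
  assumes "a + b = N"
  shows "comm H (differential a b) = smat (of_int (int a - int b)) (differential a b)"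
proof -
  have "comm H (differential a b) = real_of_int (int a - int b) *\<^sub>R differential a b"
    using assms by (simp add: differential_def comm_scaleR_right comm_H_lowered)
  then show ?thesis by (simp only: smat_of_int)
qed

lemma sl2_sym_mult_differential:
  assumes "a + b = N"
  shows "\<exists>c. c \<noteq> 0 \<and> S ** differential a b = smat c (differential b a ** S)"
proof -
  obtain \<gamma> where \<gamma>: "S ** lowered b = \<gamma> *\<^sub>R (lowered a ** S)"
    using sl2_sym_mult_lowered[of b] assms by (metis add_diff_cancel_right' le_add2)
  obtain \<gamma>' where \<gamma>': "S ** lowered a = \<gamma>' *\<^sub>R (lowered b ** S)"
    using sl2_sym_mult_lowered[of a] assms by (metis add_diff_cancel_left' le_add1)
  obtain S' where S': "S' ** S = mat 1" using invertible_sl2_sym by (auto simp: invertible_def)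
  have S_cancel: "X = 0" if "S ** X = 0" for X
    by (metis S' matrix_mul_assoc matrix_mul_lid that times0_right)
  show ?thesis
  proof (cases "\<gamma> = 0")
    case True
    then have "lowered b = 0" using \<gamma> S_cancel by simp
    then have "lowered a = 0" using \<gamma>' S_cancel by simp
    then show ?thesis
      using \<open>lowered b = 0\<close> smat_of_real[of 1] by (intro exI[of _ 1]) (simp add: differential_def)
  next
    case False
    define c where "c = fact a * \<gamma> / fact b"
    have "S ** differential a b = c *\<^sub>R (differential b a ** S)"
      by (simp add: differential_def matrix_mult_distribs \<gamma> c_def)
    moreover have "complex_of_real c \<noteq> 0" using False by (simp add: c_def)
    ultimately show ?thesis by (metis smat_of_real)
  qed
qed

end

theorem lemma3p27:
  fixes qd ad td :: "'n::finite \<Rightarrow> int"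
    and E F H dN :: "'n op"
    and N :: nat
  assumes N: "N \<ge> 1"
    and H_def: "H = half_qdeg qd"
    and EF: "comm E F = H"
    and HE: "comm H E = smat 2 E"
    and HF: "comm H F = smat (-2) F"
    and E_deg: "homog qd ad td E 4 0 (-4)"
    and F_deg: "homog qd ad td F (-4) 0 4"
    and dN_deg: "homog qd ad td dN (2 * int N) (-2) 0"
    and E_dN: "comm E dN = 0"
  shows "\<exists>d :: nat \<Rightarrow> nat \<Rightarrow> 'n op.
           d N 0 = dN \<and>
           (\<forall>a b. a + b = N \<longrightarrow>
              comm E (d a b) = smat (of_nat b) (d (a + 1) (b - 1)) \<and>
              comm F (d a b) = smat (of_nat a) (d (a - 1) (b + 1)) \<and>
              comm H (d a b) = smat (of_int (int a - int b)) (d a b)) \<and>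
           (\<forall>a b. a + b = N \<longrightarrow>
              (\<exists>c. c \<noteq> 0 \<and> sl2_sym E F ** d a b = smat c (d b a ** sl2_sym E F)))"
proof -
  \<comment> \<open>\<open>HE\<close> and \<open>HF\<close> follow from the q-degrees of \<open>E\<close> and \<open>F\<close>.\<close>
  interpret sl2_highest_weight qd E F H dN N
    using H_def EF E_dN homog_imp_qhomog[OF E_deg] homog_imp_qhomog[OF F_deg]
      homog_imp_qhomog[OF dN_deg]
    by unfold_locales simp_all
  show ?thesis
    by (intro exI[of _ differential] conjI allI impI differential_N_0 comm_E_differential
        comm_F_differential comm_H_differential sl2_sym_mult_differential)
qed

end
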